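(* There is a unique algebra homomorphism $\psi:U^j\to U$ such that $\psi(\mathbf e_i)=f_i+f_{\bar i}$, $\psi(\mathbf f_i)=e_i+e_{\bar i}$ for $1\le i<n$; $\psi(\mathbf e_n)=2f_n$, $\psi(\mathbf f_n)=e_n$; $\psi(\mathbf d_i)=-h_i-h_{\bar i}$ for $1\le i\le n$; and $\psi(\mathbf d_{n+1})=-2h_{n+1}$.
   Context: Fix $n\ge1$. Let $\mathfrak g=\mathfrak{gl}_{2n+1}(\mathbb C)$ with matrix units $E_{a,b}$, $E_i=E_{i,i+1}$, $F_i=E_{i+1,i}$, $H_i=E_{i,i}$. Let $\theta(X)=JXJ^{-1}$ where $J$ is the antidiagonal permutation matrix (so $\theta(E_{a,b})=E_{2n+2-a,2n+2-b}$), $\mathfrak g^\theta$ its fixed-point Lie subalgebra and $U^j=U(\mathfrak g^\theta)$. Set $\mathbf e_i=E_i+F_{2n+1-i}$, $\mathbf f_i=F_i+E_{2n+1-i}$, $\mathbf d_i=H_i+H_{2n+2-i}$ ($1\le i\le n$), $\mathbf d_{n+1}=2H_{n+1}$; these generate $U^j$. Let $U=U(\mathfrak{gl}_{n+1}(\mathbb C)\oplus\mathfrak{gl}_n(\mathbb C))$, where $e_i=E_{i,i+1}$, $f_i=E_{i+1,i}$ ($1\le i\le n$), $h_i=E_{i,i}$ ($1\le i\le n+1$) are the Chevalley generators of $\mathfrak{gl}_{n+1}$, and $e_{\bar i}=E_{i,i+1},f_{\bar i}=E_{i+1,i}$ ($1\le i\le n-1$), $h_{\bar i}=E_{i,i}$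 ($1\le i\le n$) those of $\mathfrak{gl}_n$; elements of the two summands commute. *)

theory Defs
  imports "Jordan_Normal_Form.Matrix"
begin

definition calg :: "(complex \<Rightarrow> 'a::ring_1 \<Rightarrow> 'a) \<Rightarrow> bool" where
  "calg sc \<longleftrightarrow>
     (\<forall>c x y. sc c (x + y) = sc c x + sc c y) \<and>
     (\<forall>c d x. sc (c + d) x = sc c x + sc d x) \<and>
     (\<forall>c d x. sc (c * d) x = sc c (sc d x)) \<and>
     (\<forall>x. sc 1 x = x) \<and>
     (\<forall>c x y. sc c (x * y) = sc c x * y) \<and>
     (\<forall>c x y. sc c (x * y) = x * sc c y)"

definition alg_hom :: "(complex \<Rightarrow> 'a::ring_1 \<Rightarrow> 'a) \<Rightarrow> (complex \<Rightarrow> 'b::ring_1 \<Rightarrow> 'b)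
    \<Rightarrow> ('a \<Rightarrow> 'b) \<Rightarrow> bool" where
  "alg_hom scA scB \<Phi> \<longleftrightarrow> \<Phi> 1 = 1 \<and>
     (\<forall>x y. \<Phi> (x + y) = \<Phi> x + \<Phi> y) \<and>
     (\<forall>x y. \<Phi> (x * y) = \<Phi> x * \<Phi> y) \<and>
     (\<forall>c x. \<Phi> (scA c x) = scB c (\<Phi> x))"

definition lie_map :: "'v set \<Rightarrow> ('v \<Rightarrow> 'v \<Rightarrow> 'v) \<Rightarrow> (complex \<Rightarrow> 'v \<Rightarrow> 'v)
    \<Rightarrow> ('v \<Rightarrow> 'v \<Rightarrow> 'v) \<Rightarrow> (complex \<Rightarrow> 'b::ring_1 \<Rightarrow> 'b) \<Rightarrow> ('v \<Rightarrow> 'b) \<Rightarrow> bool" where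
  "lie_map L addv scv brv sc \<phi> \<longleftrightarrow>
     (\<forall>x\<in>L. \<forall>y\<in>L. \<phi> (addv x y) = \<phi> x + \<phi> y) \<and>
     (\<forall>c. \<forall>x\<in>L. \<phi> (scv c x) = sc c (\<phi> x)) \<and>
     (\<forall>x\<in>L. \<forall>y\<in>L. \<phi> (brv x y) = \<phi> x * \<phi> y - \<phi> y * \<phi> x)"

text \<open>(A, scA, \<iota>) is a universal enveloping algebra of the Lie algebra L, where the
  universal property is asserted for all complex algebra structures on the type 'c.\<close>
definition is_uea :: "'v set \<Rightarrow> ('v \<Rightarrow> 'v \<Rightarrow> 'v) \<Rightarrow> (complex \<Rightarrow> 'v \<Rightarrow> 'v)
    \<Rightarrow> ('v \<Rightarrow> 'v \<Rightarrow> 'v) \<Rightarrow> (complex \<Rightarrow> 'a::ring_1 \<Rightarrow> 'a) \<Rightarrow> ('v \<Rightarrow> 'a)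
    \<Rightarrow> 'c::ring_1 itself \<Rightarrow> bool" where
  "is_uea L addv scv brv scA \<iota> (_::'c itself) \<longleftrightarrow>
     calg scA \<and> lie_map L addv scv brv scA \<iota> \<and>
     (\<forall>scB::complex \<Rightarrow> 'c \<Rightarrow> 'c. calg scB \<longrightarrow>
        (\<forall>\<phi>. lie_map L addv scv brv scB \<phi> \<longrightarrow>
           (\<exists>!\<Phi>. alg_hom scA scB \<Phi> \<and> (\<forall>x\<in>L. \<Phi> (\<iota> x) = \<phi> x))))"

text \<open>Matrix units, 1-indexed as in the paper: E N a b = E_{a,b} in gl_N.\<close>
definition Eu :: "nat \<Rightarrow> nat \<Rightarrow> nat \<Rightarrow> complex mat" where
  "Eu N a b = mat N N (\<lambda>(i, j). if i = a - 1 \<and> j = b - 1 then 1 else 0)"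

definition Jm :: "nat \<Rightarrow> complex mat" where
  "Jm N = mat N N (\<lambda>(i, j). if i + j = N - 1 then 1 else 0)"

text \<open>theta(X) = J X J^{-1}; note J^{-1} = J.\<close>
definition theta :: "nat \<Rightarrow> complex mat \<Rightarrow> complex mat" where
  "theta N X = Jm N * X * Jm N"

definition gtheta :: "nat \<Rightarrow> complex mat set" where
  "gtheta n = {X \<in> carrier_mat (2*n+1) (2*n+1). theta (2*n+1) X = X}"

definition commutator :: "complex mat \<Rightarrow> complex mat \<Rightarrow> complex mat" where
  "commutator X Y = X * Y - Y * X"

definition be :: "nat \<Rightarrow> nat \<Rightarrow> complex mat" where
  "be n i = Eu (2*n+1) i (i+1) + Eu (2*n+1) (2*n+2-i) (2*n+1-i)"
definition bf :: "nat \<Rightarrow> nat \<Rightarrow> complex mat" where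
  "bf n i = Eu (2*n+1) (i+1) i + Eu (2*n+1) (2*n+1-i) (2*n+2-i)"
definition bd :: "nat \<Rightarrow> nat \<Rightarrow> complex mat" where
  "bd n i = (if i = n + 1 then 2 \<cdot>\<^sub>m Eu (2*n+1) (n+1) (n+1)
             else Eu (2*n+1) i i + Eu (2*n+1) (2*n+2-i) (2*n+2-i))"

definition gsum :: "nat \<Rightarrow> (complex mat \<times> complex mat) set" where
  "gsum n = carrier_mat (n+1) (n+1) \<times> carrier_mat n n"
definition padd :: "complex mat \<times> complex mat \<Rightarrow> complex mat \<times> complex mat \<Rightarrow> complex mat \<times> complex mat" where
  "padd x y = (fst x + fst y, snd x + snd y)"
definition psc :: "complex \<Rightarrow> complex mat \<times> complex mat \<Rightarrow> complex mat \<times> complex mat" where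
  "psc c x = (c \<cdot>\<^sub>m fst x, c \<cdot>\<^sub>m snd x)"
definition pbr :: "complex mat \<times> complex mat \<Rightarrow> complex mat \<times> complex mat \<Rightarrow> complex mat \<times> complex mat" where
  "pbr x y = (commutator (fst x) (fst y), commutator (snd x) (snd y))"

text \<open>Chevalley generators: e_i, f_i, h_i of gl_{n+1}; e_ibar, f_ibar, h_ibar of gl_n.\<close>
definition ce :: "nat \<Rightarrow> nat \<Rightarrow> complex mat \<times> complex mat" where
  "ce n i = (Eu (n+1) i (i+1), 0\<^sub>m n n)"
definition cf :: "nat \<Rightarrow> nat \<Rightarrow> complex mat \<times> complex mat" where
  "cf n i = (Eu (n+1) (i+1) i, 0\<^sub>m n n)"
definition ch :: "nat \<Rightarrow> nat \<Rightarrow> complex mat \<times> complex mat" where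
  "ch n i = (Eu (n+1) i i, 0\<^sub>m n n)"
definition ceb :: "nat \<Rightarrow> nat \<Rightarrow> complex mat \<times> complex mat" where
  "ceb n i = (0\<^sub>m (n+1) (n+1), Eu n i (i+1))"
definition cfb :: "nat \<Rightarrow> nat \<Rightarrow> complex mat \<times> complex mat" where
  "cfb n i = (0\<^sub>m (n+1) (n+1), Eu n (i+1) i)"
definition chb :: "nat \<Rightarrow> nat \<Rightarrow> complex mat \<times> complex mat" where
  "chb n i = (0\<^sub>m (n+1) (n+1), Eu n i i)"

end

theory Submission
  imports Defs
begin

text \<open>
  The matrix \<open>J\<close> has eigenvalue \<open>1\<close> with multiplicity \<open>n + 1\<close> and eigenvalue \<open>-1\<close> with
  multiplicity \<open>n\<close>, and a matrix is \<open>\<theta>\<close>-fixed iff it commutes with \<open>J\<close>, i.e. preserves both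
  eigenspaces. Restricting to them therefore identifies the fixed-point algebra with
  \<open>gl(n+1) \<oplus> gl(n)\<close>. For suitably normalised eigenbases, and after composing with the
  Chevalley involution \<open>X \<mapsto> -X\<^sup>T\<close>, this Lie isomorphism sends the generators
  \<open>e\<^sub>i, f\<^sub>i, d\<^sub>i\<close> of \<open>U\<^sup>j\<close> to the prescribed values of \<open>\<psi>\<close>, so the universal property of
  \<open>U\<^sup>j\<close> provides \<open>\<psi>\<close>. Uniqueness holds because these values generate \<open>gl(n+1) \<oplus> gl(n)\<close>
  as a Lie algebra (by the Chevalley generators of each summand), so the \<open>\<theta>\<close>-fixed elements
  \<open>e\<^sub>i, f\<^sub>i, d\<^sub>i\<close> generate the fixed-point algebra.
\<close>

lemma sum_eq_single_term:
  fixes g :: "nat \<Rightarrow> 'a::comm_monoid_add"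
  assumes "p < N" and "\<And>a. a < N \<Longrightarrow> a \<noteq> p \<Longrightarrow> g a = 0"
  shows "(\<Sum>a=0..<N. g a) = g p"
proof -
  have "(\<Sum>a=0..<N. g a) = (\<Sum>a\<in>{p}. g a)"
    using assms by (intro sum.mono_neutral_right) auto
  then show ?thesis by simp
qed

lemma index_mult_mat_sum:
  "A \<in> carrier_mat r m \<Longrightarrow> B \<in> carrier_mat m c \<Longrightarrow> i < r \<Longrightarrow> j < c \<Longrightarrow>
   (A * B) $$ (i,j) = (\<Sum>a=0..<m. A $$ (i,a) * B $$ (a,j))"
  by (simp add: scalar_prod_def)

text \<open>The library states these laws with carrier hypotheses whose inner dimensions \<open>simp\<close>
  cannot guess; stated via \<open>dim_row\<close>/\<open>dim_col\<close> they are discharged automatically.\<close>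

lemma assoc_mult_mat_dims:
  "dim_col A = dim_row B \<Longrightarrow> dim_col B = dim_row C \<Longrightarrow> A * B * C = A * (B * C)"
  by (rule assoc_mult_mat[of A "dim_row A" "dim_col A" B "dim_col B" C "dim_col C"]) auto

lemma mult_add_distrib_mat_dims:
  "dim_col A = dim_row B \<Longrightarrow> dim_row B = dim_row C \<Longrightarrow> dim_col B = dim_col C \<Longrightarrow>
   A * (B + C) = A * B + A * C"
  by (rule mult_add_distrib_mat[of A "dim_row A" "dim_col A" B "dim_col B"]) auto

lemma add_mult_distrib_mat_dims:
  "dim_row B = dim_row A \<Longrightarrow> dim_col B = dim_col A \<Longrightarrow> dim_col A = dim_row C \<Longrightarrow>
   (A + B) * C = A * C + B * C"
  by (rule add_mult_distrib_mat[of A "dim_row A" "dim_col A" B C "dim_col C"]) auto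

lemma mult_minus_distrib_mat_dims:
  fixes A :: "'a::comm_ring mat"
  shows "dim_col A = dim_row B \<Longrightarrow> dim_row B = dim_row C \<Longrightarrow> dim_col B = dim_col C \<Longrightarrow>
   A * (B - C) = A * B - A * C"
  by (rule mult_minus_distrib_mat[of A "dim_row A" "dim_col A" B "dim_col B"]) auto

lemma minus_mult_distrib_mat_dims:
  fixes A :: "'a::comm_ring mat"
  shows "dim_row B = dim_row A \<Longrightarrow> dim_col B = dim_col A \<Longrightarrow> dim_col A = dim_row C \<Longrightarrow>
   (A - B) * C = A * C - B * C"
  by (rule minus_mult_distrib_mat[of A "dim_row A" "dim_col A" B C "dim_col C"]) auto

lemma mult_smult_mat_dims:
  "dim_col A = dim_row B \<Longrightarrow> A * (c \<cdot>\<^sub>m B) = (c::'a::comm_ring) \<cdot>\<^sub>m (A * B)"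
  by (rule mult_smult_distrib[of A "dim_row A" "dim_col A" B "dim_col B"]) auto

lemma smult_mult_mat_dims:
  "dim_col A = dim_row B \<Longrightarrow> (c \<cdot>\<^sub>m A) * B = (c::'a::comm_ring) \<cdot>\<^sub>m (A * B)"
  by (rule mult_smult_assoc_mat[of A "dim_row A" "dim_col A" B "dim_col B"]) auto

lemma add_zero_mat_dims:
  "dim_row A = nr \<Longrightarrow> dim_col A = nc \<Longrightarrow> A + 0\<^sub>m nr nc = (A :: 'a::monoid_add mat)"
  "dim_row A = nr \<Longrightarrow> dim_col A = nc \<Longrightarrow> 0\<^sub>m nr nc + A = (A :: 'a::monoid_add mat)"
  by (auto intro!: eq_matI)

lemmas mat_dims_simps = add_zero_mat_dims assoc_mult_mat_dims mult_add_distrib_mat_dims add_mult_distrib_mat_dims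
  mult_minus_distrib_mat_dims minus_mult_distrib_mat_dims mult_smult_mat_dims smult_mult_mat_dims

lemma minus_zero_mat_dims [simp]:
  "dim_row A = nr \<Longrightarrow> dim_col A = nc \<Longrightarrow> A - 0\<^sub>m nr nc = (A :: 'a::group_add mat)"
  by (auto intro!: eq_matI)

lemma Eu_carrier [simp]: "Eu N a b \<in> carrier_mat N N"
  and dim_Eu [simp]: "dim_row (Eu N a b) = N" "dim_col (Eu N a b) = N"
  by (simp_all add: Eu_def)

lemma Eu_mult_Eu:
  assumes "1 \<le> b" "b \<le> m" "1 \<le> c" "c \<le> m"
  shows "Eu m a b * Eu m c d = (if b = c then Eu m a d else 0\<^sub>m m m)"
proof (rule eq_matI)
  fix i j assume ij: "i < dim_row (if b = c then Eu m a d else 0\<^sub>m m m)"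
    "j < dim_col (if b = c then Eu m a d else 0\<^sub>m m m)"
  then have "i < m" "j < m" by (auto split: if_splits)
  then have "(Eu m a b * Eu m c d) $$ (i,j) = (\<Sum>t=0..<m. Eu m a b $$ (i,t) * Eu m c d $$ (t,j))"
    by (intro index_mult_mat_sum) auto
  also have "\<dots> = Eu m a b $$ (i,b-1) * Eu m c d $$ (b-1,j)"
    using assms \<open>i < m\<close> by (intro sum_eq_single_term) (auto simp: Eu_def)
  finally show "(Eu m a b * Eu m c d) $$ (i,j) = (if b = c then Eu m a d else 0\<^sub>m m m) $$ (i,j)"
    using assms \<open>i < m\<close> \<open>j < m\<close> by (auto simp: Eu_def)
qed (auto split: if_splits)

lemma commutator_Eu_Eu:
  assumes "1 \<le> a" "a \<le> m" "1 \<le> b" "b \<le> m" "1 \<le> c" "c \<le> m"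
  shows "a \<noteq> c \<Longrightarrow> commutator (Eu m a b) (Eu m b c) = Eu m a c"
    and "a \<noteq> b \<Longrightarrow> commutator (Eu m a b) (Eu m b a) = Eu m a a - Eu m b b"
  using assms by (simp_all add: commutator_def Eu_mult_Eu)

lemma commutator_zero_mat [simp]:
  "A \<in> carrier_mat m m \<Longrightarrow> commutator A (0\<^sub>m m m) = 0\<^sub>m m m"
  "A \<in> carrier_mat m m \<Longrightarrow> commutator (0\<^sub>m m m) A = 0\<^sub>m m m"
  by (auto simp: commutator_def intro!: eq_matI)

lemma mult_Eu_mult:
  assumes L: "L \<in> carrier_mat r N" and R: "R \<in> carrier_mat N c"
    and ab: "1 \<le> a" "a \<le> N" "1 \<le> b" "b \<le> N"
  shows "L * Eu N a b * R = mat r c (\<lambda>(k,j). L $$ (k,a-1) * R $$ (b-1,j))"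
proof -
  have LE: "L * Eu N a b = mat r N (\<lambda>(k,t). if t = b - 1 then L $$ (k,a-1) else 0)"
  proof (rule eq_matI)
    fix k t assume kt: "k < dim_row (mat r N (\<lambda>(k,t). if t = b - 1 then L $$ (k,a-1) else 0))"
      "t < dim_col (mat r N (\<lambda>(k,t). if t = b - 1 then L $$ (k,a-1) else 0))"
    have "(L * Eu N a b) $$ (k,t) = (\<Sum>s=0..<N. L $$ (k,s) * Eu N a b $$ (s,t))"
      using kt L by (intro index_mult_mat_sum) auto
    also have "\<dots> = L $$ (k,a-1) * Eu N a b $$ (a-1,t)"
      using ab kt by (intro sum_eq_single_term) (auto simp: Eu_def)
    finally show "(L * Eu N a b) $$ (k,t) = mat r N (\<lambda>(k,t). if t = b - 1 then L $$ (k,a-1) else 0) $$ (k,t)"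
      using kt ab by (auto simp: Eu_def)
  qed (use L in auto)
  show ?thesis
  proof (rule eq_matI)
    fix k j assume kj: "k < dim_row (mat r c (\<lambda>(k,j). L $$ (k,a-1) * R $$ (b-1,j)))"
      "j < dim_col (mat r c (\<lambda>(k,j). L $$ (k,a-1) * R $$ (b-1,j)))"
    have "(L * Eu N a b * R) $$ (k,j) = (\<Sum>t=0..<N. (L * Eu N a b) $$ (k,t) * R $$ (t,j))"
      using kj L R by (intro index_mult_mat_sum) auto
    also have "\<dots> = (L * Eu N a b) $$ (k,b-1) * R $$ (b-1,j)"
      using ab kj by (intro sum_eq_single_term) (auto simp: LE)
    finally show "(L * Eu N a b * R) $$ (k,j) = mat r c (\<lambda>(k,j). L $$ (k,a-1) * R $$ (b-1,j)) $$ (k,j)"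
      using kj ab by (simp add: LE)
  qed (use L R in auto)
qed

lemma neg_transpose_commutator:
  assumes "A \<in> carrier_mat m m" "B \<in> carrier_mat m m"
  shows "- transpose_mat (commutator A B) = commutator (- transpose_mat A) (- transpose_mat B)"
proof -
  have "commutator (- transpose_mat A) (- transpose_mat B) = transpose_mat (B * A) - transpose_mat (A * B)"
    using assms by (simp add: commutator_def transpose_mult)
  also have "\<dots> = - transpose_mat (commutator A B)"
    using assms by (auto simp: commutator_def intro!: eq_matI)
  finally show ?thesis ..
qed

section \<open>The involution \<open>theta\<close>\<close>

lemma Jm_carrier [simp]: "Jm N \<in> carrier_mat N N"
  and dim_Jm [simp]: "dim_row (Jm N) = N" "dim_col (Jm N) = N"
  by (simp_all add: Jm_def)

lemma index_Jm_mult: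
  assumes "A \<in> carrier_mat N c" "i < N" "j < c"
  shows "(Jm N * A) $$ (i,j) = A $$ (N - 1 - i, j)"
proof -
  have "(Jm N * A) $$ (i,j) = (\<Sum>t=0..<N. Jm N $$ (i,t) * A $$ (t,j))"
    using assms by (intro index_mult_mat_sum) auto
  also have "\<dots> = Jm N $$ (i, N - 1 - i) * A $$ (N - 1 - i, j)"
    using assms by (intro sum_eq_single_term) (auto simp: Jm_def)
  finally show ?thesis using assms by (simp add: Jm_def)
qed

lemma index_mult_Jm:
  assumes "A \<in> carrier_mat r N" "i < r" "j < N"
  shows "(A * Jm N) $$ (i,j) = A $$ (i, N - 1 - j)"
proof -
  have "(A * Jm N) $$ (i,j) = (\<Sum>t=0..<N. A $$ (i,t) * Jm N $$ (t,j))"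
    using assms by (intro index_mult_mat_sum) auto
  also have "\<dots> = A $$ (i, N - 1 - j) * Jm N $$ (N - 1 - j, j)"
    using assms by (intro sum_eq_single_term) (auto simp: Jm_def)
  finally show ?thesis using assms by (simp add: Jm_def)
qed

lemma Jm_mult_eqI:
  assumes "A \<in> carrier_mat N c" "B \<in> carrier_mat N c"
    and "\<And>i j. i < N \<Longrightarrow> j < c \<Longrightarrow> A $$ (N - 1 - i, j) = B $$ (i,j)"
  shows "Jm N * A = B"
  using assms by (intro eq_matI) (auto simp del: index_mult_mat(1) simp: index_Jm_mult carrier_matD)

lemma mult_Jm_eqI:
  assumes "A \<in> carrier_mat r N" "B \<in> carrier_mat r N"
    and "\<And>i j. i < r \<Longrightarrow> j < N \<Longrightarrow> A $$ (i, N - 1 - j) = B $$ (i,j)"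
  shows "A * Jm N = B"
  using assms by (intro eq_matI) (auto simp del: index_mult_mat(1) simp: index_mult_Jm carrier_matD)

lemma Jm_mult_Jm: "Jm N * Jm N = 1\<^sub>m N"
proof (rule eq_matI)
  fix i j assume "i < dim_row (1\<^sub>m N)" "j < dim_col (1\<^sub>m N)"
  then show "(Jm N * Jm N) $$ (i,j) = 1\<^sub>m N $$ (i,j)"
    by (subst index_Jm_mult[of _ N N]) (auto simp: Jm_def)
qed auto

lemma theta_carrier [simp]: "theta N X \<in> carrier_mat N N"
  and dim_theta [simp]: "dim_row (theta N X) = N" "dim_col (theta N X) = N"
  by (simp_all add: theta_def carrier_matI)

lemma index_theta:
  assumes "X \<in> carrier_mat N N" "i < N" "j < N"
  shows "theta N X $$ (i,j) = X $$ (N - 1 - i, N - 1 - j)"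
proof -
  have "theta N X $$ (i,j) = (Jm N * X) $$ (i, N - 1 - j)"
    unfolding theta_def using assms by (intro index_mult_Jm) auto
  also have "\<dots> = X $$ (N - 1 - i, N - 1 - j)"
    using assms by (intro index_Jm_mult) auto
  finally show ?thesis .
qed

lemma theta_theta: "X \<in> carrier_mat N N \<Longrightarrow> theta N (theta N X) = X"
  by (rule eq_matI) (auto simp: index_theta)

lemma theta_add:
  "X \<in> carrier_mat N N \<Longrightarrow> Y \<in> carrier_mat N N \<Longrightarrow> theta N (X + Y) = theta N X + theta N Y"
  by (rule eq_matI) (auto simp: index_theta)

lemma theta_minus:
  "X \<in> carrier_mat N N \<Longrightarrow> Y \<in> carrier_mat N N \<Longrightarrow> theta N (X - Y) = theta N X - theta N Y"
  by (rule eq_matI) (auto simp: index_theta minus_carrier_mat)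

lemma theta_smult: "X \<in> carrier_mat N N \<Longrightarrow> theta N (c \<cdot>\<^sub>m X) = c \<cdot>\<^sub>m theta N X"
  by (rule eq_matI) (auto simp: index_theta)

lemma theta_mult:
  assumes "X \<in> carrier_mat N N" "Y \<in> carrier_mat N N"
  shows "theta N (X * Y) = theta N X * theta N Y"
proof -
  have "theta N X * theta N Y = Jm N * X * (Jm N * Jm N) * Y * Jm N"
    using assms by (simp add: theta_def mat_dims_simps)
  then show ?thesis using assms by (simp add: Jm_mult_Jm theta_def mat_dims_simps)
qed

lemma theta_Eu:
  "1 \<le> a \<Longrightarrow> a \<le> N \<Longrightarrow> 1 \<le> b \<Longrightarrow> b \<le> N \<Longrightarrow> theta N (Eu N a b) = Eu N (N + 1 - a) (N + 1 - b)"
  by (rule eq_matI) (auto simp: index_theta Eu_def)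

lemma gtheta_iff: "X \<in> gtheta n \<longleftrightarrow> X \<in> carrier_mat (2*n+1) (2*n+1) \<and> theta (2*n+1) X = X"
  by (simp add: gtheta_def)

lemma add_theta_in_gtheta:
  assumes "X \<in> carrier_mat (2*n+1) (2*n+1)"
  shows "X + theta (2*n+1) X \<in> gtheta n"
  using assms by (simp add: gtheta_iff theta_add theta_theta comm_add_mat[of _ "2*n+1" "2*n+1"])

lemma gtheta_commutes_Jm:
  assumes "X \<in> gtheta n"
  shows "Jm (2*n+1) * X = X * Jm (2*n+1)"
proof (rule eq_matI)
  let ?N = "2*n+1"
  have X: "X \<in> carrier_mat ?N ?N" "theta ?N X = X" using assms by (auto simp: gtheta_iff)
  fix i j assume "i < dim_row (X * Jm ?N)" "j < dim_col (X * Jm ?N)"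
  then have ij: "i < ?N" "j < ?N" using X by auto
  have "(Jm ?N * X) $$ (i,j) = X $$ (?N - 1 - i, j)"
    using X ij by (intro index_Jm_mult) auto
  also have "\<dots> = theta ?N X $$ (i, ?N - 1 - j)"
    using X ij by (subst index_theta) auto
  also have "\<dots> = (X * Jm ?N) $$ (i,j)"
    using X ij by (subst index_mult_Jm[of _ ?N ?N]) (auto simp: index_theta)
  finally show "(Jm ?N * X) $$ (i,j) = (X * Jm ?N) $$ (i,j)" .
qed (use assms in \<open>auto simp: gtheta_iff\<close>)

lemma be_eq_add_theta:
  "1 \<le> i \<Longrightarrow> i \<le> n \<Longrightarrow> be n i = Eu (2*n+1) i (i+1) + theta (2*n+1) (Eu (2*n+1) i (i+1))"
  by (simp add: be_def theta_Eu)

lemma bf_eq_add_theta: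
  "1 \<le> i \<Longrightarrow> i \<le> n \<Longrightarrow> bf n i = Eu (2*n+1) (i+1) i + theta (2*n+1) (Eu (2*n+1) (i+1) i)"
  by (simp add: bf_def theta_Eu)

lemma bd_eq_add_theta:
  "1 \<le> i \<Longrightarrow> i \<le> n + 1 \<Longrightarrow> bd n i = Eu (2*n+1) i i + theta (2*n+1) (Eu (2*n+1) i i)"
  by (auto simp: bd_def theta_Eu intro!: eq_matI)

definition lie_closed ::
  "('v \<Rightarrow> 'v \<Rightarrow> 'v) \<Rightarrow> (complex \<Rightarrow> 'v \<Rightarrow> 'v) \<Rightarrow> ('v \<Rightarrow> 'v \<Rightarrow> 'v) \<Rightarrow> 'v set \<Rightarrow> bool" where
  "lie_closed addv scv brv S \<longleftrightarrow>
     (\<forall>x\<in>S. \<forall>y\<in>S. addv x y \<in> S \<and> brv x y \<in> S) \<and> (\<forall>c. \<forall>x\<in>S. scv c x \<in> S)"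

definition lie_generates ::
  "'v set \<Rightarrow> ('v \<Rightarrow> 'v \<Rightarrow> 'v) \<Rightarrow> (complex \<Rightarrow> 'v \<Rightarrow> 'v) \<Rightarrow> ('v \<Rightarrow> 'v \<Rightarrow> 'v) \<Rightarrow> 'v set \<Rightarrow> bool" where
  "lie_generates L addv scv brv G \<longleftrightarrow>
     G \<subseteq> L \<and> (\<forall>S. lie_closed addv scv brv S \<longrightarrow> G \<subseteq> S \<longrightarrow> L \<subseteq> S)"

lemma lie_closedI:
  assumes "\<And>x y. x \<in> S \<Longrightarrow> y \<in> S \<Longrightarrow> addv x y \<in> S"
    and "\<And>x y. x \<in> S \<Longrightarrow> y \<in> S \<Longrightarrow> brv x y \<in> S"
    and "\<And>c x. x \<in> S \<Longrightarrow> scv c x \<in> S"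
  shows "lie_closed addv scv brv S"
  using assms by (auto simp: lie_closed_def)

lemma lie_closedD:
  assumes "lie_closed addv scv brv S"
  shows "x \<in> S \<Longrightarrow> y \<in> S \<Longrightarrow> addv x y \<in> S" "x \<in> S \<Longrightarrow> y \<in> S \<Longrightarrow> brv x y \<in> S"
    "x \<in> S \<Longrightarrow> scv c x \<in> S"
  using assms by (auto simp: lie_closed_def)

lemma lie_closed_Int:
  "lie_closed addv scv brv S \<Longrightarrow> lie_closed addv scv brv T \<Longrightarrow> lie_closed addv scv brv (S \<inter> T)"
  by (auto simp: lie_closed_def)

lemma gtheta_lie_closed: "lie_closed (+) (\<cdot>\<^sub>m) commutator (gtheta n)"
  unfolding lie_closed_def commutator_def
  by (auto simp: gtheta_iff theta_add theta_smult theta_minus theta_mult minus_carrier_mat)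

definition theta_gens :: "nat \<Rightarrow> complex mat set" where
  "theta_gens n = {be n i | i. 1 \<le> i \<and> i \<le> n} \<union> {bf n i | i. 1 \<le> i \<and> i \<le> n}
     \<union> {bd n i | i. 1 \<le> i \<and> i \<le> n + 1}"

lemma theta_gens_subset_gtheta: "theta_gens n \<subseteq> gtheta n"
  by (auto simp: theta_gens_def be_eq_add_theta bf_eq_add_theta bd_eq_add_theta
      simp del: One_nat_def intro!: add_theta_in_gtheta)

section \<open>Splitting along the eigenspaces of \<open>J\<close>\<close>

lemma sandwich_eq_zero_if_eigen:
  fixes J X L R :: "'a::idom mat"
  assumes J: "J \<in> carrier_mat N N" and X: "X \<in> carrier_mat N N"
    and L: "L \<in> carrier_mat r N" and R: "R \<in> carrier_mat N c"
    and LJ: "L * J = s \<cdot>\<^sub>m L" and JR: "J * R = t \<cdot>\<^sub>m R" and "s \<noteq> t" and JX: "J * X = X * J"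
  shows "L * X * R = 0\<^sub>m r c"
proof -
  have "s \<cdot>\<^sub>m (L * X * R) = (s \<cdot>\<^sub>m L) * X * R"
    using X L R by (simp add: mat_dims_simps)
  also have "\<dots> = L * (J * X) * R"
    using J X L R by (simp add: LJ[symmetric] mat_dims_simps)
  also have "\<dots> = L * X * (J * R)"
    using J X L R by (simp add: JX mat_dims_simps)
  also have "\<dots> = t \<cdot>\<^sub>m (L * X * R)"
    using X L R by (simp add: JR mat_dims_simps)
  finally have st: "s \<cdot>\<^sub>m (L * X * R) = t \<cdot>\<^sub>m (L * X * R)" .
  show ?thesis
  proof (rule eq_matI)
    fix i j assume ij: "i < dim_row (0\<^sub>m r c :: 'a mat)" "j < dim_col (0\<^sub>m r c :: 'a mat)"
    have "s * (L * X * R) $$ (i,j) = t * (L * X * R) $$ (i,j)"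
      using arg_cong[OF st, of "\<lambda>M. M $$ (i,j)"] ij L R by simp
    then show "(L * X * R) $$ (i,j) = 0\<^sub>m r c $$ (i,j)" using ij \<open>s \<noteq> t\<close> by simp
  qed (use L R in auto)
qed

lemma sandwich_mult_through_splitting:
  fixes X Y L R :: "'a::comm_ring_1 mat"
  assumes R1: "R1 \<in> carrier_mat N k1" and L1: "L1 \<in> carrier_mat k1 N"
    and R2: "R2 \<in> carrier_mat N k2" and L2: "L2 \<in> carrier_mat k2 N"
    and split: "R1 * L1 + R2 * L2 = 1\<^sub>m N"
    and L: "L \<in> carrier_mat r N" and R: "R \<in> carrier_mat N c"
    and X: "X \<in> carrier_mat N N" and Y: "Y \<in> carrier_mat N N"
    and vanish: "L * X * R2 = 0\<^sub>m r k2"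
  shows "L * (X * Y) * R = (L * X * R1) * (L1 * Y * R)"
proof -
  have "L * (X * Y) * R = L * (X * (R1 * L1 + R2 * L2) * Y) * R"
    using X by (simp add: split)
  also have "\<dots> = (L * X * R1) * (L1 * Y * R) + (L * X * R2) * (L2 * Y * R)"
    using R1 L1 R2 L2 L R X Y by (simp add: mat_dims_simps)
  also have "\<dots> = (L * X * R1) * (L1 * Y * R)"
    using R1 L1 L2 L R X Y vanish by (simp add: mat_dims_simps)
  finally show ?thesis .
qed

lemma sandwich_commutator_through_splitting:
  assumes R1: "R1 \<in> carrier_mat N k1" and L1: "L1 \<in> carrier_mat k1 N"
    and R2: "R2 \<in> carrier_mat N k2" and L2: "L2 \<in> carrier_mat k2 N"
    and split: "R1 * L1 + R2 * L2 = 1\<^sub>m N"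
    and X: "X \<in> carrier_mat N N" and Y: "Y \<in> carrier_mat N N"
    and vanish: "L1 * X * R2 = 0\<^sub>m k1 k2" "L1 * Y * R2 = 0\<^sub>m k1 k2"
  shows "L1 * commutator X Y * R1 = commutator (L1 * X * R1) (L1 * Y * R1)"
proof -
  have "L1 * commutator X Y * R1 = L1 * (X * Y) * R1 - L1 * (Y * X) * R1"
    using L1 R1 X Y by (simp add: commutator_def mat_dims_simps)
  also have "\<dots> = commutator (L1 * X * R1) (L1 * Y * R1)"
    unfolding commutator_def
    using sandwich_mult_through_splitting[OF R1 L1 R2 L2 split L1 R1 X Y vanish(1)]
      sandwich_mult_through_splitting[OF R1 L1 R2 L2 split L1 R1 Y X vanish(2)] by simp
  finally show ?thesis .
qed

lemma reconstruct_from_splitting: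
  fixes X :: "'a::comm_ring_1 mat"
  assumes R1: "R1 \<in> carrier_mat N k1" and L1: "L1 \<in> carrier_mat k1 N"
    and R2: "R2 \<in> carrier_mat N k2" and L2: "L2 \<in> carrier_mat k2 N"
    and split: "R1 * L1 + R2 * L2 = 1\<^sub>m N" and X: "X \<in> carrier_mat N N"
    and vanish: "L1 * X * R2 = 0\<^sub>m k1 k2" "L2 * X * R1 = 0\<^sub>m k2 k1"
  shows "X = R1 * (L1 * X * R1) * L1 + R2 * (L2 * X * R2) * L2"
proof -
  have "X = (R1 * L1 + R2 * L2) * X * (R1 * L1 + R2 * L2)"
    using X by (simp add: split)
  also have "\<dots> = (R1 * (L1 * X * R1) * L1 + R2 * (L2 * X * R1) * L1)
      + (R1 * (L1 * X * R2) * L2 + R2 * (L2 * X * R2) * L2)"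
    using R1 L1 R2 L2 X by (simp add: mat_dims_simps)
  also have "\<dots> = R1 * (L1 * X * R1) * L1 + R2 * (L2 * X * R2) * L2"
    using R1 L1 R2 L2 X vanish by (simp add: mat_dims_simps)
  finally show ?thesis .
qed

text \<open>In the standard basis \<open>e\<^sub>0, \<dots>, e\<^sub>2\<^sub>n\<close>, the columns of \<open>pos_basis n\<close> (\<open>e\<^sub>k + e\<^sub>2\<^sub>n\<^sub>-\<^sub>k\<close> for \<open>k < n\<close>,
  and \<open>2 e\<^sub>n\<close>, up to sign) span the
  \<open>1\<close>-eigenspace of \<open>J\<close>, those of \<open>neg_basis n\<close> (\<open>e\<^sub>k - e\<^sub>2\<^sub>n\<^sub>-\<^sub>k\<close>) the \<open>-1\<close>-eigenspace; the rows of
  \<open>pos_coord n\<close> and \<open>neg_coord n\<close> are the dual coordinates. The signs \<open>(-1)\<^sup>k\<close> and the factor \<open>2\<close>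
  on the middle vector make the generators land exactly on the values prescribed for \<open>\<psi>\<close>.\<close>

definition pos_basis :: "nat \<Rightarrow> complex mat" where
  "pos_basis n = mat (2*n+1) (n+1) (\<lambda>(a,k). (-1)^k *
     (if k < n then (if a = k \<or> a = 2*n-k then 1 else 0) else (if a = n then 2 else 0)))"

definition pos_coord :: "nat \<Rightarrow> complex mat" where
  "pos_coord n = mat (n+1) (2*n+1) (\<lambda>(k,a). (-1)^k *
     (if k < n then (if a = k \<or> a = 2*n-k then 1/2 else 0) else (if a = n then 1/2 else 0)))"

definition neg_basis :: "nat \<Rightarrow> complex mat" where
  "neg_basis n = mat (2*n+1) n (\<lambda>(a,k). (-1)^k * (if a = k then 1 else if a = 2*n-k then -1 else 0))"

definition neg_coord :: "nat \<Rightarrow> complex mat" where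
  "neg_coord n = mat n (2*n+1) (\<lambda>(k,a). (-1)^k * (if a = k then 1/2 else if a = 2*n-k then -1/2 else 0))"

lemma basis_coord_carrier:
  "pos_basis n \<in> carrier_mat (2*n+1) (n+1)" "pos_coord n \<in> carrier_mat (n+1) (2*n+1)"
  "neg_basis n \<in> carrier_mat (2*n+1) n" "neg_coord n \<in> carrier_mat n (2*n+1)"
  by (simp_all add: pos_basis_def pos_coord_def neg_basis_def neg_coord_def)

text \<open>\<open>simp\<close> rewrites \<open>2*n+1\<close> to \<open>Suc (2*n)\<close>, so the simp set needs the carriers in that form.\<close>

lemmas basis_coord_carrier_Suc [simp] = basis_coord_carrier[simplified]

lemma dim_basis_coord [simp]:
  "dim_row (pos_basis n) = 2*n+1" "dim_col (pos_basis n) = n+1"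
  "dim_row (pos_coord n) = n+1" "dim_col (pos_coord n) = 2*n+1"
  "dim_row (neg_basis n) = 2*n+1" "dim_col (neg_basis n) = n"
  "dim_row (neg_coord n) = n" "dim_col (neg_coord n) = 2*n+1"
  by (simp_all add: pos_basis_def pos_coord_def neg_basis_def neg_coord_def)

lemma Jm_mult_pos_basis: "Jm (2*n+1) * pos_basis n = pos_basis n"
  by (rule Jm_mult_eqI) (auto simp: pos_basis_def)

lemma Jm_mult_neg_basis: "Jm (2*n+1) * neg_basis n = - neg_basis n"
  by (rule Jm_mult_eqI) (auto simp: neg_basis_def)

lemma pos_coord_mult_Jm: "pos_coord n * Jm (2*n+1) = pos_coord n"
  by (rule mult_Jm_eqI) (auto simp: pos_coord_def)

lemma neg_coord_mult_Jm: "neg_coord n * Jm (2*n+1) = - neg_coord n"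
  by (rule mult_Jm_eqI) (auto simp: neg_coord_def)

lemma basis_coord_splitting:
  "pos_basis n * pos_coord n + neg_basis n * neg_coord n = 1\<^sub>m (2*n+1)"
proof (rule eq_matI)
  fix i j assume "i < dim_row (1\<^sub>m (2*n+1))" "j < dim_col (1\<^sub>m (2*n+1))"
  then have ij: "i < 2*n+1" "j < 2*n+1" by auto
  define k where "k = min i (2*n - i)"
  have k: "k \<le> n" "i = k \<or> i = 2*n - k" using ij by (auto simp: k_def)
  have pos: "(pos_basis n * pos_coord n) $$ (i,j) = pos_basis n $$ (i,k) * pos_coord n $$ (k,j)"
  proof -
    have "(pos_basis n * pos_coord n) $$ (i,j) = (\<Sum>a=0..<n+1. pos_basis n $$ (i,a) * pos_coord n $$ (a,j))"
      using ij by (intro index_mult_mat_sum) auto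
    also have "\<dots> = pos_basis n $$ (i,k) * pos_coord n $$ (k,j)"
      using ij k by (intro sum_eq_single_term) (auto simp: pos_basis_def)
    finally show ?thesis .
  qed
  have neg: "(neg_basis n * neg_coord n) $$ (i,j) = (if k < n then neg_basis n $$ (i,k) * neg_coord n $$ (k,j) else 0)"
  proof -
    have "(neg_basis n * neg_coord n) $$ (i,j) = (\<Sum>a=0..<n. neg_basis n $$ (i,a) * neg_coord n $$ (a,j))"
      using ij by (intro index_mult_mat_sum) auto
    also have "\<dots> = (if k < n then neg_basis n $$ (i,k) * neg_coord n $$ (k,j) else 0)"
    proof (cases "k < n")
      case True
      then show ?thesis using ij k by (simp, intro sum_eq_single_term) (auto simp: neg_basis_def)
    next
      case False
      then show ?thesis using ij k by (simp, intro sum.neutral) (auto simp: neg_basis_def)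
    qed
    finally show ?thesis .
  qed
  have "(pos_basis n * pos_coord n + neg_basis n * neg_coord n) $$ (i,j)
      = (pos_basis n * pos_coord n) $$ (i,j) + (neg_basis n * neg_coord n) $$ (i,j)"
    using ij by (intro index_add_mat(1)) auto
  also have "\<dots> = 1\<^sub>m (2*n+1) $$ (i,j)"
    unfolding pos neg using ij k by (auto simp: pos_basis_def pos_coord_def neg_basis_def neg_coord_def)
  finally show "(pos_basis n * pos_coord n + neg_basis n * neg_coord n) $$ (i,j) = 1\<^sub>m (2*n+1) $$ (i,j)" .
qed auto

lemma basis_coord_splitting_swapped:
  "neg_basis n * neg_coord n + pos_basis n * pos_coord n = 1\<^sub>m (2*n+1)"
  using basis_coord_splitting[of n]
    comm_add_mat[OF mult_carrier_mat[OF basis_coord_carrier(1,2)] mult_carrier_mat[OF basis_coord_carrier(3,4)]]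
  by simp

lemma pos_coord_entry: "k \<le> n \<Longrightarrow> x \<le> n \<Longrightarrow> pos_coord n $$ (k,x) = (if k = x then (-1)^x / 2 else 0)"
  and pos_basis_entry:
    "x \<le> n \<Longrightarrow> j \<le> n \<Longrightarrow> pos_basis n $$ (x,j) = (if j = x then (-1)^x * (if x = n then 2 else 1) else 0)"
  and neg_coord_entry: "k < n \<Longrightarrow> x \<le> n \<Longrightarrow> neg_coord n $$ (k,x) = (if k = x then (-1)^x / 2 else 0)"
  and neg_basis_entry: "x \<le> n \<Longrightarrow> j < n \<Longrightarrow> neg_basis n $$ (x,j) = (if j = x then (-1)^x else 0)"
  by (auto simp: pos_coord_def pos_basis_def neg_coord_def neg_basis_def)

lemma coord_sandwich_eq_zero:
  assumes X: "X \<in> gtheta n"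
  shows "pos_coord n * X * neg_basis n = 0\<^sub>m (n+1) n"
    and "neg_coord n * X * pos_basis n = 0\<^sub>m n (n+1)"
proof -
  have XJ: "X \<in> carrier_mat (2*n+1) (2*n+1)" "Jm (2*n+1) * X = X * Jm (2*n+1)"
    using X gtheta_commutes_Jm by (auto simp: gtheta_iff)
  have pos: "pos_coord n * Jm (2*n+1) = 1 \<cdot>\<^sub>m pos_coord n"
    and neg: "neg_coord n * Jm (2*n+1) = (-1) \<cdot>\<^sub>m neg_coord n"
    unfolding pos_coord_mult_Jm neg_coord_mult_Jm by (auto intro!: eq_matI)
  have pos': "Jm (2*n+1) * pos_basis n = 1 \<cdot>\<^sub>m pos_basis n"
    and neg': "Jm (2*n+1) * neg_basis n = (-1) \<cdot>\<^sub>m neg_basis n"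
    unfolding Jm_mult_pos_basis Jm_mult_neg_basis by (auto intro!: eq_matI)
  show "pos_coord n * X * neg_basis n = 0\<^sub>m (n+1) n"
    by (rule sandwich_eq_zero_if_eigen[OF Jm_carrier XJ(1) basis_coord_carrier(2,3) pos neg' _ XJ(2)]) simp
  show "neg_coord n * X * pos_basis n = 0\<^sub>m n (n+1)"
    by (rule sandwich_eq_zero_if_eigen[OF Jm_carrier XJ(1) basis_coord_carrier(4,1) neg pos' _ XJ(2)]) simp
qed

section \<open>The isomorphism onto \<open>gl(n+1) \<oplus> gl(n)\<close>\<close>

text \<open>Restriction to the two eigenspaces, followed by the Chevalley involution \<open>X \<mapsto> -X\<^sup>T\<close>
  (which is why \<open>e\<^sub>i\<close> is sent to lower triangular matrices).\<close>

definition to_gsum :: "nat \<Rightarrow> complex mat \<Rightarrow> complex mat \<times> complex mat" where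
  "to_gsum n X = (- transpose_mat (pos_coord n * X * pos_basis n),
                   - transpose_mat (neg_coord n * X * neg_basis n))"

lemma to_gsum_in_gsum: "to_gsum n X \<in> gsum n"
  unfolding to_gsum_def gsum_def by (intro SigmaI carrier_matI) simp_all

lemma to_gsum_add:
  assumes "X \<in> carrier_mat (2*n+1) (2*n+1)" "Y \<in> carrier_mat (2*n+1) (2*n+1)"
  shows "to_gsum n (X + Y) = padd (to_gsum n X) (to_gsum n Y)"
  using assms by (auto simp: to_gsum_def padd_def mat_dims_simps intro!: eq_matI)

lemma to_gsum_smult:
  assumes "X \<in> carrier_mat (2*n+1) (2*n+1)"
  shows "to_gsum n (c \<cdot>\<^sub>m X) = psc c (to_gsum n X)"
  using assms by (auto simp: to_gsum_def psc_def mat_dims_simps intro!: eq_matI)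

lemma to_gsum_commutator:
  assumes X: "X \<in> gtheta n" and Y: "Y \<in> gtheta n"
  shows "to_gsum n (commutator X Y) = pbr (to_gsum n X) (to_gsum n Y)"
proof -
  have c: "X \<in> carrier_mat (2*n+1) (2*n+1)" "Y \<in> carrier_mat (2*n+1) (2*n+1)"
    using X Y by (auto simp: gtheta_iff)
  have pos: "pos_coord n * commutator X Y * pos_basis n
      = commutator (pos_coord n * X * pos_basis n) (pos_coord n * Y * pos_basis n)"
    by (rule sandwich_commutator_through_splitting[OF _ _ _ _ basis_coord_splitting c])
      (simp_all add: coord_sandwich_eq_zero X Y)
  have neg: "neg_coord n * commutator X Y * neg_basis n
      = commutator (neg_coord n * X * neg_basis n) (neg_coord n * Y * neg_basis n)"
    by (rule sandwich_commutator_through_splitting[OF _ _ _ _ basis_coord_splitting_swapped c])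
      (simp_all add: coord_sandwich_eq_zero X Y)
  show ?thesis
    unfolding to_gsum_def pbr_def fst_conv snd_conv pos neg prod.inject
    using c by (intro conjI neg_transpose_commutator carrier_matI) simp_all
qed

lemma gtheta_eq_of_to_gsum:
  assumes X: "X \<in> gtheta n"
  shows "X = pos_basis n * (- transpose_mat (fst (to_gsum n X))) * pos_coord n
           + neg_basis n * (- transpose_mat (snd (to_gsum n X))) * neg_coord n"
proof -
  have "X \<in> carrier_mat (2*n+1) (2*n+1)" using X by (simp add: gtheta_iff)
  then have "X = pos_basis n * (pos_coord n * X * pos_basis n) * pos_coord n
           + neg_basis n * (neg_coord n * X * neg_basis n) * neg_coord n"
    by (rule reconstruct_from_splitting[OF basis_coord_carrier basis_coord_splitting _
          coord_sandwich_eq_zero[OF X]])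
  then show ?thesis by (simp add: to_gsum_def transpose_uminus)
qed

lemma inj_on_to_gsum: "inj_on (to_gsum n) (gtheta n)"
  by (rule inj_onI) (metis gtheta_eq_of_to_gsum)

lemma to_gsum_lie_closed_image:
  assumes "lie_closed (+) (\<cdot>\<^sub>m) commutator D" "D \<subseteq> gtheta n"
  shows "lie_closed padd psc pbr (to_gsum n ` D)"
  unfolding lie_closed_def
proof (intro conjI ballI allI)
  fix p q assume "p \<in> to_gsum n ` D" "q \<in> to_gsum n ` D"
  then obtain X Y where XY: "X \<in> D" "Y \<in> D" "p = to_gsum n X" "q = to_gsum n Y" by blast
  then have "X \<in> gtheta n" "Y \<in> gtheta n" using assms(2) by auto
  then show "padd p q \<in> to_gsum n ` D" "pbr p q \<in> to_gsum n ` D"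
    using XY lie_closedD[OF assms(1)]
    by (auto simp: to_gsum_add[symmetric] to_gsum_commutator[symmetric] gtheta_iff intro!: imageI)
next
  fix c p assume "p \<in> to_gsum n ` D"
  then obtain X where X: "X \<in> D" "p = to_gsum n X" by blast
  then show "psc c p \<in> to_gsum n ` D"
    using assms lie_closedD[OF assms(1)] by (auto simp: to_gsum_smult[symmetric] gtheta_iff)
qed

lemma lie_map_comp_to_gsum:
  assumes "lie_map (gsum n) padd psc pbr sc \<phi>"
  shows "lie_map (gtheta n) (+) (\<cdot>\<^sub>m) commutator sc (\<lambda>X. \<phi> (to_gsum n X))"
  using assms
  by (auto simp: lie_map_def gtheta_iff to_gsum_in_gsum to_gsum_add to_gsum_smult to_gsum_commutator)

lemma neg_one_power_pred_mult:
  "1 \<le> a \<Longrightarrow> 1 \<le> b \<Longrightarrow> (-1 :: 'a::ring_1)^(a-1) * (-1)^(b-1) = (-1)^(a+b)"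
  by (cases a; cases b) (simp_all add: power_add)

lemma pos_sandwich_Eu:
  assumes a: "1 \<le> a" "a \<le> n + 1" and b: "1 \<le> b" "b \<le> n + 1"
  shows "- transpose_mat (pos_coord n * Eu (2*n+1) a b * pos_basis n)
      = (- ((-1)^(a+b)) * (if b = n + 1 then 1 else 1/2)) \<cdot>\<^sub>m Eu (n+1) b a"
    (is "_ = ?E")
proof (rule eq_matI)
  fix k j assume "k < dim_row ?E" "j < dim_col ?E"
  then have kj: "k \<le> n" "j \<le> n" by auto
  have "(- transpose_mat (pos_coord n * Eu (2*n+1) a b * pos_basis n)) $$ (k,j)
      = - (pos_coord n $$ (j,a-1) * pos_basis n $$ (b-1,k))"
    using a b kj by (subst mult_Eu_mult[of _ "n+1" _ _ "n+1"]) auto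
  also have "\<dots> = ?E $$ (k,j)"
  proof (cases "k = b - 1 \<and> j = a - 1")
    case True
    then show ?thesis
      using a b kj
      by (auto simp: pos_coord_entry pos_basis_entry Eu_def neg_one_power_pred_mult[of a b, symmetric])
  next
    case False
    then show ?thesis using a b kj by (auto simp: pos_coord_entry pos_basis_entry Eu_def)
  qed
  finally show "(- transpose_mat (pos_coord n * Eu (2*n+1) a b * pos_basis n)) $$ (k,j) = ?E $$ (k,j)" .
qed auto

lemma neg_sandwich_Eu:
  assumes a: "1 \<le> a" "a \<le> n + 1" and b: "1 \<le> b" "b \<le> n + 1"
  shows "- transpose_mat (neg_coord n * Eu (2*n+1) a b * neg_basis n) = (- ((-1)^(a+b)) / 2) \<cdot>\<^sub>m Eu n b a"
    (is "_ = ?E")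
proof (rule eq_matI)
  fix k j assume "k < dim_row ?E" "j < dim_col ?E"
  then have kj: "k < n" "j < n" by auto
  have "(- transpose_mat (neg_coord n * Eu (2*n+1) a b * neg_basis n)) $$ (k,j)
      = - (neg_coord n $$ (j,a-1) * neg_basis n $$ (b-1,k))"
    using a b kj by (subst mult_Eu_mult[of _ n _ _ n]) auto
  also have "\<dots> = ?E $$ (k,j)"
  proof (cases "k = b - 1 \<and> j = a - 1")
    case True
    then show ?thesis
      using a b kj
      by (auto simp: neg_coord_entry neg_basis_entry Eu_def neg_one_power_pred_mult[of a b, symmetric])
  next
    case False
    then show ?thesis using a b kj by (auto simp: neg_coord_entry neg_basis_entry Eu_def)
  qed
  finally show "(- transpose_mat (neg_coord n * Eu (2*n+1) a b * neg_basis n)) $$ (k,j) = ?E $$ (k,j)" .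
qed auto

lemma to_gsum_Eu:
  assumes "1 \<le> a" "a \<le> n + 1" "1 \<le> b" "b \<le> n + 1"
  shows "to_gsum n (Eu (2*n+1) a b) =
    ((- ((-1)^(a+b)) * (if b = n + 1 then 1 else 1/2)) \<cdot>\<^sub>m Eu (n+1) b a, (- ((-1)^(a+b)) / 2) \<cdot>\<^sub>m Eu n b a)"
  unfolding to_gsum_def pos_sandwich_Eu[OF assms] neg_sandwich_Eu[OF assms] ..

lemma to_gsum_add_theta:
  assumes X: "X \<in> carrier_mat (2*n+1) (2*n+1)"
  shows "to_gsum n (X + theta (2*n+1) X) = psc 2 (to_gsum n X)"
proof -
  let ?J = "Jm (2*n+1)"
  have "pos_coord n * theta (2*n+1) X * pos_basis n = (pos_coord n * ?J) * X * (?J * pos_basis n)"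
    using X by (simp add: theta_def mat_dims_simps)
  moreover have "neg_coord n * theta (2*n+1) X * neg_basis n = (neg_coord n * ?J) * X * (?J * neg_basis n)"
    using X by (simp add: theta_def mat_dims_simps)
  ultimately have "to_gsum n (theta (2*n+1) X) = to_gsum n X"
    unfolding to_gsum_def pos_coord_mult_Jm Jm_mult_pos_basis neg_coord_mult_Jm Jm_mult_neg_basis
    using X by simp
  then show ?thesis
    using X by (simp add: to_gsum_add psc_def padd_def) (auto intro!: eq_matI)
qed

lemma to_gsum_be:
  assumes "1 \<le> i" "i < n"
  shows "to_gsum n (be n i) = padd (cf n i) (cfb n i)"
proof -
  have "to_gsum n (be n i) = psc 2 (to_gsum n (Eu (2*n+1) i (i+1)))"
    using assms by (simp only: be_eq_add_theta to_gsum_add_theta Eu_carrier less_imp_le)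
  also have "\<dots> = padd (cf n i) (cfb n i)"
    using assms by (subst to_gsum_Eu) (auto simp: psc_def padd_def cf_def cfb_def Eu_def intro!: eq_matI)
  finally show ?thesis .
qed

lemma to_gsum_bf:
  assumes "1 \<le> i" "i < n"
  shows "to_gsum n (bf n i) = padd (ce n i) (ceb n i)"
proof -
  have "to_gsum n (bf n i) = psc 2 (to_gsum n (Eu (2*n+1) (i+1) i))"
    using assms by (simp only: bf_eq_add_theta to_gsum_add_theta Eu_carrier less_imp_le)
  also have "\<dots> = padd (ce n i) (ceb n i)"
    using assms by (subst to_gsum_Eu) (auto simp: psc_def padd_def ce_def ceb_def Eu_def intro!: eq_matI)
  finally show ?thesis .
qed

lemma to_gsum_be_last:
  assumes "1 \<le> n"
  shows "to_gsum n (be n n) = psc 2 (cf n n)"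
proof -
  have "to_gsum n (be n n) = psc 2 (to_gsum n (Eu (2*n+1) n (n+1)))"
    using assms by (simp only: be_eq_add_theta to_gsum_add_theta Eu_carrier order_refl)
  also have "\<dots> = psc 2 (cf n n)"
    using assms by (subst to_gsum_Eu) (auto simp: psc_def cf_def Eu_def intro!: eq_matI)
  finally show ?thesis .
qed

lemma to_gsum_bf_last:
  assumes "1 \<le> n"
  shows "to_gsum n (bf n n) = ce n n"
proof -
  have "to_gsum n (bf n n) = psc 2 (to_gsum n (Eu (2*n+1) (n+1) n))"
    using assms by (simp only: bf_eq_add_theta to_gsum_add_theta Eu_carrier order_refl)
  also have "\<dots> = ce n n"
    using assms by (subst to_gsum_Eu) (auto simp: psc_def ce_def Eu_def intro!: eq_matI)
  finally show ?thesis .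
qed

lemma to_gsum_bd:
  assumes "1 \<le> i" "i \<le> n"
  shows "to_gsum n (bd n i) = psc (-1) (padd (ch n i) (chb n i))"
proof -
  have "to_gsum n (bd n i) = psc 2 (to_gsum n (Eu (2*n+1) i i))"
    using assms bd_eq_add_theta[of i n] by (simp only: to_gsum_add_theta Eu_carrier trans_le_add1)
  also have "\<dots> = psc (-1) (padd (ch n i) (chb n i))"
    using assms by (subst to_gsum_Eu) (auto simp: psc_def padd_def ch_def chb_def Eu_def intro!: eq_matI)
  finally show ?thesis .
qed

lemma to_gsum_bd_last: "to_gsum n (bd n (n+1)) = psc (-2) (ch n (n+1))"
proof -
  have "to_gsum n (bd n (n+1)) = psc 2 (to_gsum n (Eu (2*n+1) (n+1) (n+1)))"
    by (simp only: bd_eq_add_theta to_gsum_add_theta Eu_carrier le_add2 order_refl)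
  also have "\<dots> = psc (-2) (ch n (n+1))"
    by (subst to_gsum_Eu) (auto simp: psc_def ch_def Eu_def intro!: eq_matI)
  finally show ?thesis .
qed

lemma carrier_mat_subset_if_span_Eu:
  assumes add: "\<And>A B. A \<in> S \<Longrightarrow> B \<in> S \<Longrightarrow> A + B \<in> S"
    and smult: "\<And>c A. A \<in> S \<Longrightarrow> c \<cdot>\<^sub>m A \<in> S"
    and zero: "0\<^sub>m m m \<in> S"
    and units: "\<And>a b. 1 \<le> a \<Longrightarrow> a \<le> m \<Longrightarrow> 1 \<le> b \<Longrightarrow> b \<le> m \<Longrightarrow> Eu m a b \<in> S"
  shows "carrier_mat m m \<subseteq> S"
proof
  fix A :: "complex mat" assume A: "A \<in> carrier_mat m m"
  define part where "part P = mat m m (\<lambda>ij. if ij \<in> P then A $$ ij else 0)" for P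
  have "part P \<in> S" if "finite P" "P \<subseteq> {..<m} \<times> {..<m}" for P
    using that
  proof (induction P rule: finite_induct)
    case empty
    have "part {} = 0\<^sub>m m m" by (auto simp: part_def)
    then show ?case using zero by simp
  next
    case (insert ij P)
    obtain i j where ij: "ij = (i,j)" "i < m" "j < m" using insert.prems by auto
    have "part (insert ij P) = part P + A $$ (i,j) \<cdot>\<^sub>m Eu m (i+1) (j+1)"
      using insert.hyps(2) ij by (auto simp: part_def Eu_def)
    then show ?case using insert ij add smult units by simp
  qed
  moreover have "part ({..<m} \<times> {..<m}) = A" using A by (auto simp: part_def)
  ultimately show "A \<in> S" by (metis finite_SigmaI finite_lessThan subset_refl)
qed

lemma carrier_mat_subset_if_lie_closed_Chevalley:
  assumes "1 \<le> m" and S: "lie_closed (+) (\<cdot>\<^sub>m) commutator S"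
    and diag: "\<And>k. 1 \<le> k \<Longrightarrow> k \<le> m \<Longrightarrow> Eu m k k \<in> S"
    and up: "\<And>k. 1 \<le> k \<Longrightarrow> k < m \<Longrightarrow> Eu m k (k+1) \<in> S"
    and down: "\<And>k. 1 \<le> k \<Longrightarrow> k < m \<Longrightarrow> Eu m (k+1) k \<in> S"
  shows "carrier_mat m m \<subseteq> S"
proof -
  have upper: "Eu m a (a+d) \<in> S" if "1 \<le> a" "a + d \<le> m" for a d
    using that
  proof (induction d)
    case (Suc d)
    have "Eu m a (a + Suc d) = commutator (Eu m a (a+d)) (Eu m (a+d) (a+d+1))"
      using Suc.prems by (simp add: commutator_Eu_Eu)
    then show ?case using Suc lie_closedD(2)[OF S] up by simp
  qed (use diag in simp)
  have lower: "Eu m (b+d) b \<in> S" if "1 \<le> b" "b + d \<le> m" for b d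
    using that
  proof (induction d)
    case (Suc d)
    have "Eu m (b + Suc d) b = commutator (Eu m (b+d+1) (b+d)) (Eu m (b+d) b)"
      using Suc.prems by (simp add: commutator_Eu_Eu)
    then show ?case using Suc lie_closedD(2)[OF S] down by simp
  qed (use diag in simp)
  have units: "Eu m a b \<in> S" if "1 \<le> a" "a \<le> m" "1 \<le> b" "b \<le> m" for a b
    using upper[of a "b - a"] lower[of b "a - b"] that by (cases "a \<le> b") auto
  have "0 \<cdot>\<^sub>m Eu m 1 1 \<in> S" using units lie_closedD(3)[OF S] \<open>1 \<le> m\<close> by blast
  moreover have "0 \<cdot>\<^sub>m Eu m 1 1 = 0\<^sub>m m m" by (auto intro!: eq_matI)
  ultimately show ?thesis
    using lie_closedD[OF S] units by (intro carrier_mat_subset_if_span_Eu) auto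
qed

lemma lie_closed_fst_slice:
  assumes C: "lie_closed padd psc pbr C"
  shows "lie_closed (+) (\<cdot>\<^sub>m) commutator {A \<in> carrier_mat m m. (A, 0\<^sub>m k k) \<in> C}"
proof (rule lie_closedI; clarify)
  fix A B assume A: "A \<in> carrier_mat m m" "(A, 0\<^sub>m k k) \<in> C" and B: "B \<in> carrier_mat m m" "(B, 0\<^sub>m k k) \<in> C"
  have "padd (A, 0\<^sub>m k k) (B, 0\<^sub>m k k) = (A + B, 0\<^sub>m k k)"
    and "pbr (A, 0\<^sub>m k k) (B, 0\<^sub>m k k) = (commutator A B, 0\<^sub>m k k)"
    by (auto simp: padd_def pbr_def)
  then show "A + B \<in> carrier_mat m m \<and> (A + B, 0\<^sub>m k k) \<in> C"
    "commutator A B \<in> carrier_mat m m \<and> (commutator A B, 0\<^sub>m k k) \<in> C"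
    using A B lie_closedD(1,2)[OF C A(2) B(2)] by (auto simp: commutator_def minus_carrier_mat)
next
  fix c A assume A: "A \<in> carrier_mat m m" "(A, 0\<^sub>m k k) \<in> C"
  have "psc c (A, 0\<^sub>m k k) = (c \<cdot>\<^sub>m A, 0\<^sub>m k k)" by (auto simp: psc_def)
  then show "c \<cdot>\<^sub>m A \<in> carrier_mat m m \<and> (c \<cdot>\<^sub>m A, 0\<^sub>m k k) \<in> C"
    using A lie_closedD(3)[OF C A(2), where c = c] by simp
qed

lemma lie_closed_snd_slice:
  assumes C: "lie_closed padd psc pbr C"
  shows "lie_closed (+) (\<cdot>\<^sub>m) commutator {B \<in> carrier_mat k k. (0\<^sub>m m m, B) \<in> C}"
proof (rule lie_closedI; clarify)
  fix A B assume A: "A \<in> carrier_mat k k" "(0\<^sub>m m m, A) \<in> C" and B: "B \<in> carrier_mat k k" "(0\<^sub>m m m, B) \<in> C"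
  have "padd (0\<^sub>m m m, A) (0\<^sub>m m m, B) = (0\<^sub>m m m, A + B)"
    and "pbr (0\<^sub>m m m, A) (0\<^sub>m m m, B) = (0\<^sub>m m m, commutator A B)"
    by (auto simp: padd_def pbr_def)
  then show "A + B \<in> carrier_mat k k \<and> (0\<^sub>m m m, A + B) \<in> C"
    "commutator A B \<in> carrier_mat k k \<and> (0\<^sub>m m m, commutator A B) \<in> C"
    using A B lie_closedD(1,2)[OF C A(2) B(2)] by (auto simp: commutator_def minus_carrier_mat)
next
  fix c A assume A: "A \<in> carrier_mat k k" "(0\<^sub>m m m, A) \<in> C"
  have "psc c (0\<^sub>m m m, A) = (0\<^sub>m m m, c \<cdot>\<^sub>m A)" by (auto simp: psc_def)
  then show "c \<cdot>\<^sub>m A \<in> carrier_mat k k \<and> (0\<^sub>m m m, c \<cdot>\<^sub>m A) \<in> C"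
    using A lie_closedD(3)[OF C A(2), where c = c] by simp
qed

lemma lie_closed_pair_diff:
  assumes "lie_closed padd psc pbr C" "(A, B) \<in> C" "(A', B') \<in> C"
    and "A \<in> carrier_mat m m" "A' \<in> carrier_mat m m" "B \<in> carrier_mat k k" "B' \<in> carrier_mat k k"
  shows "(A - A', B - B') \<in> C"
proof -
  have "padd (A, B) (psc (-1) (A', B')) \<in> C" using assms(1-3) by (simp add: lie_closedD)
  moreover have "padd (A, B) (psc (-1) (A', B')) = (A - A', B - B')"
    using assms(4-) by (auto simp: padd_def psc_def intro!: eq_matI)
  ultimately show ?thesis by simp
qed

lemma lie_closed_pair_separate:
  assumes C: "lie_closed padd psc pbr C" and AB: "(A, B) \<in> C"
    and A: "A \<in> carrier_mat m m" and B: "B \<in> carrier_mat k k"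
  shows "(A, 0\<^sub>m k k) \<in> C \<Longrightarrow> (0\<^sub>m m m, B) \<in> C"
    and "(0\<^sub>m m m, B) \<in> C \<Longrightarrow> (A, 0\<^sub>m k k) \<in> C"
proof -
  have "A - A = 0\<^sub>m m m" "A - 0\<^sub>m m m = A" "B - B = 0\<^sub>m k k" "B - 0\<^sub>m k k = B"
    using A B by (auto intro!: eq_matI)
  then show "(A, 0\<^sub>m k k) \<in> C \<Longrightarrow> (0\<^sub>m m m, B) \<in> C" "(0\<^sub>m m m, B) \<in> C \<Longrightarrow> (A, 0\<^sub>m k k) \<in> C"
    using lie_closed_pair_diff[OF C AB, of A "0\<^sub>m k k" m k] lie_closed_pair_diff[OF C AB, of "0\<^sub>m m m" B m k] A B
    by auto
qed

lemma lie_closed_bracket_snd: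
  assumes C: "lie_closed padd psc pbr C" and "(A, B) \<in> C" "(0\<^sub>m m m, H) \<in> C"
    and "A \<in> carrier_mat m m"
  shows "(0\<^sub>m m m, commutator B H) \<in> C" "(0\<^sub>m m m, commutator H B) \<in> C"
proof -
  have "pbr (A, B) (0\<^sub>m m m, H) \<in> C" "pbr (0\<^sub>m m m, H) (A, B) \<in> C"
    using lie_closedD(2)[OF C] assms(2,3) by blast+
  then show "(0\<^sub>m m m, commutator B H) \<in> C" "(0\<^sub>m m m, commutator H B) \<in> C"
    using assms(4) by (simp_all add: pbr_def)
qed

definition gsum_gens :: "nat \<Rightarrow> (complex mat \<times> complex mat) set" where
  "gsum_gens n = {padd (ce n i) (ceb n i) | i. 1 \<le> i \<and> i < n} \<union> {padd (cf n i) (cfb n i) | i. 1 \<le> i \<and> i < n}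
     \<union> {padd (ch n i) (chb n i) | i. 1 \<le> i \<and> i \<le> n} \<union> {ce n n, cf n n, ch n (n+1)}"

lemma gsum_gens_subset_gsum: "gsum_gens n \<subseteq> gsum n"
  by (auto simp: gsum_gens_def gsum_def padd_def ce_def ceb_def cf_def cfb_def ch_def chb_def)

lemma gsum_gens_pairs:
  assumes "gsum_gens n \<subseteq> C"
  shows "\<And>k. 1 \<le> k \<Longrightarrow> k < n \<Longrightarrow> (Eu (n+1) k (k+1), Eu n k (k+1)) \<in> C"
    and "\<And>k. 1 \<le> k \<Longrightarrow> k < n \<Longrightarrow> (Eu (n+1) (k+1) k, Eu n (k+1) k) \<in> C"
    and "\<And>k. 1 \<le> k \<Longrightarrow> k \<le> n \<Longrightarrow> (Eu (n+1) k k, Eu n k k) \<in> C"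
    and "(Eu (n+1) n (n+1), 0\<^sub>m n n) \<in> C" "(Eu (n+1) (n+1) n, 0\<^sub>m n n) \<in> C"
      "(Eu (n+1) (n+1) (n+1), 0\<^sub>m n n) \<in> C"
  using assms by (auto simp: gsum_gens_def padd_def ce_def ceb_def cf_def cfb_def ch_def chb_def)

text \<open>Subtracting a separated \<open>(E\<^sub>k\<^sub>k, 0)\<close> from the generator \<open>(E\<^sub>k\<^sub>k, E\<^sub>k\<^sub>k)\<close> leaves \<open>(0, E\<^sub>k\<^sub>k)\<close>;
  bracketing the off-diagonal generators with \<open>(0, E\<^sub>k\<^sub>+\<^sub>1\<^sub>,\<^sub>k\<^sub>+\<^sub>1)\<close> separates them as well.\<close>

lemma gsum_gens_separate:
  assumes C: "lie_closed padd psc pbr C" and G: "gsum_gens n \<subseteq> C"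
  shows "\<And>k. 1 \<le> k \<Longrightarrow> k \<le> n \<Longrightarrow> (Eu (n+1) k k, 0\<^sub>m n n) \<in> C \<Longrightarrow> (0\<^sub>m (n+1) (n+1), Eu n k k) \<in> C"
    and "\<And>k. 1 \<le> k \<Longrightarrow> k < n \<Longrightarrow> (0\<^sub>m (n+1) (n+1), Eu n (k+1) (k+1)) \<in> C \<Longrightarrow>
      (0\<^sub>m (n+1) (n+1), Eu n k (k+1)) \<in> C \<and> (0\<^sub>m (n+1) (n+1), Eu n (k+1) k) \<in> C \<and>
      (Eu (n+1) k (k+1), 0\<^sub>m n n) \<in> C \<and> (Eu (n+1) (k+1) k, 0\<^sub>m n n) \<in> C"
proof -
  fix k assume "1 \<le> k" "k \<le> n" "(Eu (n+1) k k, 0\<^sub>m n n) \<in> C"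
  then show "(0\<^sub>m (n+1) (n+1), Eu n k k) \<in> C"
    by (intro lie_closed_pair_separate(1)[OF C gsum_gens_pairs(3)[OF G]]) auto
next
  fix k assume k: "1 \<le> k" "k < n" and h: "(0\<^sub>m (n+1) (n+1), Eu n (k+1) (k+1)) \<in> C"
  have "(0\<^sub>m (n+1) (n+1), commutator (Eu n k (k+1)) (Eu n (k+1) (k+1))) \<in> C"
    and "(0\<^sub>m (n+1) (n+1), commutator (Eu n (k+1) (k+1)) (Eu n (k+1) k)) \<in> C"
    using lie_closed_bracket_snd[OF C gsum_gens_pairs(1)[OF G k] h]
      lie_closed_bracket_snd[OF C gsum_gens_pairs(2)[OF G k] h] by auto
  then have "(0\<^sub>m (n+1) (n+1), Eu n k (k+1)) \<in> C" "(0\<^sub>m (n+1) (n+1), Eu n (k+1) k) \<in> C"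
    using k by (simp_all add: commutator_Eu_Eu)
  then show "(0\<^sub>m (n+1) (n+1), Eu n k (k+1)) \<in> C \<and> (0\<^sub>m (n+1) (n+1), Eu n (k+1) k) \<in> C \<and>
      (Eu (n+1) k (k+1), 0\<^sub>m n n) \<in> C \<and> (Eu (n+1) (k+1) k, 0\<^sub>m n n) \<in> C"
    using lie_closed_pair_separate(2)[OF C gsum_gens_pairs(1)[OF G k] Eu_carrier Eu_carrier]
      lie_closed_pair_separate(2)[OF C gsum_gens_pairs(2)[OF G k] Eu_carrier Eu_carrier] by auto
qed

text \<open>Descending induction from \<open>E\<^sub>n\<^sub>+\<^sub>1\<^sub>,\<^sub>n\<^sub>+\<^sub>1\<close>, using \<open>[E\<^sub>k\<^sub>,\<^sub>k\<^sub>+\<^sub>1, E\<^sub>k\<^sub>+\<^sub>1\<^sub>,\<^sub>k] + E\<^sub>k\<^sub>+\<^sub>1\<^sub>,\<^sub>k\<^sub>+\<^sub>1 = E\<^sub>k\<^sub>k\<close>.\<close>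

lemma gsum_gens_diag_fst:
  assumes n: "1 \<le> n" and C: "lie_closed padd psc pbr C" and G: "gsum_gens n \<subseteq> C"
    and k: "1 \<le> k" "k \<le> n"
  shows "(Eu (n+1) k k, 0\<^sub>m n n) \<in> C"
proof -
  define S1 where "S1 = {A \<in> carrier_mat (n+1) (n+1). (A, 0\<^sub>m n n) \<in> C}"
  have S1: "lie_closed (+) (\<cdot>\<^sub>m) commutator S1" unfolding S1_def by (rule lie_closed_fst_slice[OF C])
  have diag_step: "Eu (n+1) k k \<in> S1"
    if "1 \<le> k" "k \<le> n" "Eu (n+1) k (k+1) \<in> S1" "Eu (n+1) (k+1) k \<in> S1" "Eu (n+1) (k+1) (k+1) \<in> S1" for k
  proof -
    have "commutator (Eu (n+1) k (k+1)) (Eu (n+1) (k+1) k) + Eu (n+1) (k+1) (k+1) \<in> S1"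
      using that lie_closedD[OF S1] by blast
    moreover have "commutator (Eu (n+1) k (k+1)) (Eu (n+1) (k+1) k) + Eu (n+1) (k+1) (k+1) = Eu (n+1) k k"
      using that by (simp add: commutator_Eu_Eu) (auto intro!: eq_matI)
    ultimately show ?thesis by simp
  qed
  have "Eu (n+1) k k \<in> S1"
    using k(2,1)
  proof (induction k rule: inc_induct)
    case base
    then show ?case using diag_step[of n] n gsum_gens_pairs(4-6)[OF G] by (simp add: S1_def)
  next
    case (step k)
    then have "(0\<^sub>m (n+1) (n+1), Eu n (k+1) (k+1)) \<in> C"
      using gsum_gens_separate(1)[OF C G, of "k+1"] by (simp add: S1_def)
    then have "(Eu (n+1) k (k+1), 0\<^sub>m n n) \<in> C" "(Eu (n+1) (k+1) k, 0\<^sub>m n n) \<in> C"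
      using gsum_gens_separate(2)[OF C G, of k] step by auto
    then show ?case using diag_step[of k] step by (simp add: S1_def)
  qed
  then show ?thesis by (simp add: S1_def)
qed

lemma lie_generates_gsum:
  assumes n: "1 \<le> n"
  shows "lie_generates (gsum n) padd psc pbr (gsum_gens n)"
  unfolding lie_generates_def
proof (intro conjI allI impI gsum_gens_subset_gsum)
  fix C assume C: "lie_closed padd psc pbr C" and G: "gsum_gens n \<subseteq> C"
  let ?Z1 = "0\<^sub>m (n+1) (n+1) :: complex mat" and ?Z2 = "0\<^sub>m n n :: complex mat"
  have diag1: "(Eu (n+1) k k, ?Z2) \<in> C" if "1 \<le> k" "k \<le> n" for k
    using gsum_gens_diag_fst[OF n C G that] .
  have diag2: "(?Z1, Eu n k k) \<in> C" if "1 \<le> k" "k \<le> n" for k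
    using gsum_gens_separate(1)[OF C G that diag1[OF that]] .
  have off: "(?Z1, Eu n k (k+1)) \<in> C \<and> (?Z1, Eu n (k+1) k) \<in> C \<and>
      (Eu (n+1) k (k+1), ?Z2) \<in> C \<and> (Eu (n+1) (k+1) k, ?Z2) \<in> C" if "1 \<le> k" "k < n" for k
    using gsum_gens_separate(2)[OF C G that diag2] that by simp
  have fst: "carrier_mat (n+1) (n+1) \<subseteq> {A \<in> carrier_mat (n+1) (n+1). (A, ?Z2) \<in> C}"
  proof (rule carrier_mat_subset_if_lie_closed_Chevalley[OF _ lie_closed_fst_slice[OF C]])
    fix k assume "1 \<le> k" "k \<le> n + 1"
    then show "Eu (n+1) k k \<in> {A \<in> carrier_mat (n+1) (n+1). (A, ?Z2) \<in> C}"
      using diag1 gsum_gens_pairs(6)[OF G] by (cases "k = n + 1") auto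
  next
    fix k assume k: "1 \<le> k" "k < n + 1"
    have "(Eu (n+1) k (k+1), ?Z2) \<in> C \<and> (Eu (n+1) (k+1) k, ?Z2) \<in> C"
      using k off[of k] gsum_gens_pairs(4,5)[OF G] by (cases "k = n") auto
    then show "Eu (n+1) k (k+1) \<in> {A \<in> carrier_mat (n+1) (n+1). (A, ?Z2) \<in> C}"
      "Eu (n+1) (k+1) k \<in> {A \<in> carrier_mat (n+1) (n+1). (A, ?Z2) \<in> C}" by auto
  qed simp
  have snd: "carrier_mat n n \<subseteq> {B \<in> carrier_mat n n. (?Z1, B) \<in> C}"
    by (rule carrier_mat_subset_if_lie_closed_Chevalley[OF n lie_closed_snd_slice[OF C]])
      (use diag2 off in auto)
  show "gsum n \<subseteq> C"
  proof
    fix p assume "p \<in> gsum n"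
    then obtain A B where p: "p = (A, B)" "A \<in> carrier_mat (n+1) (n+1)" "B \<in> carrier_mat n n"
      by (auto simp: gsum_def)
    then have "padd (A, ?Z2) (?Z1, B) \<in> C"
      using fst snd by (intro lie_closedD(1)[OF C]) auto
    then show "p \<in> C" using p by (simp add: padd_def)
  qed
qed

lemma psc_psc: "psc c (psc d p) = psc (c * d) p"
  and psc_one: "psc 1 p = p"
  by (cases p; auto simp: psc_def intro!: eq_matI)+

lemma gsum_gens_subset_to_gsum_image:
  assumes n: "1 \<le> n" and D: "lie_closed (+) (\<cdot>\<^sub>m) commutator D" "D \<subseteq> gtheta n"
    and gens: "theta_gens n \<subseteq> D"
  shows "gsum_gens n \<subseteq> to_gsum n ` D"
proof -
  let ?C = "to_gsum n ` D"
  have C: "lie_closed padd psc pbr ?C" by (rule to_gsum_lie_closed_image[OF D])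
  have img: "to_gsum n x \<in> ?C" if "x \<in> theta_gens n" for x
    using that gens by blast
  have "be n i \<in> theta_gens n" "bf n i \<in> theta_gens n" "bd n i \<in> theta_gens n"
    if "1 \<le> i" "i \<le> n" for i
    using that by (auto simp: theta_gens_def)
  then have be: "to_gsum n (be n i) \<in> ?C" and bf: "to_gsum n (bf n i) \<in> ?C" and bd: "to_gsum n (bd n i) \<in> ?C"
    if "1 \<le> i" "i \<le> n" for i
    using that img by blast+
  have "to_gsum n (bd n (n+1)) \<in> ?C" by (auto simp: theta_gens_def intro!: img)
  then have "psc (-1/2) (psc (-2) (ch n (n+1))) \<in> ?C"
    using to_gsum_bd_last[of n] lie_closedD(3)[OF C] by simp
  moreover have "psc (1/2) (psc 2 (cf n n)) \<in> ?C"
    using be[of n] n lie_closedD(3)[OF C] by (simp add: to_gsum_be_last)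
  moreover have "psc (-1) (psc (-1) (padd (ch n i) (chb n i))) \<in> ?C" if "1 \<le> i" "i \<le> n" for i
    using bd[OF that] that lie_closedD(3)[OF C] by (simp add: to_gsum_bd)
  moreover have "padd (ce n i) (ceb n i) \<in> ?C" "padd (cf n i) (cfb n i) \<in> ?C" if "1 \<le> i" "i < n" for i
    using bf[of i] be[of i] that by (simp_all add: to_gsum_bf to_gsum_be)
  ultimately show ?thesis
    using bf[of n] n by (auto simp: gsum_gens_def psc_psc psc_one to_gsum_bf_last)
qed

lemma lie_generates_gtheta_theta_gens:
  assumes n: "1 \<le> n"
  shows "lie_generates (gtheta n) (+) (\<cdot>\<^sub>m) commutator (theta_gens n)"
  unfolding lie_generates_def
proof (intro conjI allI impI theta_gens_subset_gtheta subsetI)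
  fix D X assume D: "lie_closed (+) (\<cdot>\<^sub>m) commutator D" and gens: "theta_gens n \<subseteq> D"
    and X: "X \<in> gtheta n"
  let ?D = "D \<inter> gtheta n"
  have D': "lie_closed (+) (\<cdot>\<^sub>m) commutator ?D" by (rule lie_closed_Int[OF D gtheta_lie_closed])
  have "gsum_gens n \<subseteq> to_gsum n ` ?D"
    using gens theta_gens_subset_gtheta by (intro gsum_gens_subset_to_gsum_image[OF n D']) auto
  then have "gsum n \<subseteq> to_gsum n ` ?D"
    using lie_generates_gsum[OF n] to_gsum_lie_closed_image[OF D'] by (auto simp: lie_generates_def)
  then obtain Y where "Y \<in> ?D" "to_gsum n Y = to_gsum n X"
    using to_gsum_in_gsum[of n X] by (metis imageE subsetD)
  then show "X \<in> D" using X inj_on_to_gsum[of n] by (metis IntD1 IntD2 inj_onD)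
qed

section \<open>Universal enveloping algebras\<close>

lemma calg_one: "calg sc \<Longrightarrow> sc 1 x = x"
  by (simp add: calg_def)

lemma calg_uminus:
  assumes "calg sc"
  shows "sc (- c) x = - sc c x"
proof -
  have "sc 0 x = sc 0 x + sc 0 x"
    using assms unfolding calg_def by (metis add_0)
  then have "sc 0 x = 0" by simp
  moreover have "sc (- c + c) x = sc (- c) x + sc c x"
    using assms unfolding calg_def by blast
  ultimately show ?thesis by (simp add: eq_neg_iff_add_eq_0)
qed

lemma alg_hom_diff: "alg_hom scA scB f \<Longrightarrow> f (x - y) = f x - f y"
  unfolding alg_hom_def by (metis add_diff_cancel diff_add_cancel)

lemma lie_map_alg_hom_comp:
  assumes "alg_hom scA scB f" "lie_map L addv scv brv scA \<phi>"
  shows "lie_map L addv scv brv scB (\<lambda>x. f (\<phi> x))"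
  using assms by (simp add: lie_map_def alg_hom_diff) (simp add: alg_hom_def)

lemma lie_map_eq_on_generated:
  assumes L: "lie_closed addv scv brv L" and G: "lie_generates L addv scv brv G"
    and f: "lie_map L addv scv brv sc f" and g: "lie_map L addv scv brv sc g"
    and eq: "\<forall>x\<in>G. f x = g x"
  shows "\<forall>x\<in>L. f x = g x"
proof -
  have "lie_closed addv scv brv {x \<in> L. f x = g x}"
    using f g lie_closedD[OF L] by (intro lie_closedI) (auto simp: lie_map_def)
  moreover have "G \<subseteq> {x \<in> L. f x = g x}" using G eq by (auto simp: lie_generates_def)
  ultimately show ?thesis using G by (auto simp: lie_generates_def)
qed

lemma uea_hom_unique_on_generators:
  fixes scB :: "complex \<Rightarrow> 'b::ring_1 \<Rightarrow> 'b"
  assumes uea: "is_uea L addv scv brv scA \<iota> TYPE('b)"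
    and L: "lie_closed addv scv brv L" and G: "lie_generates L addv scv brv G"
    and B: "calg scB" and \<phi>: "lie_map L addv scv brv scB \<phi>"
  shows "\<exists>!\<Phi>. alg_hom scA scB \<Phi> \<and> (\<forall>x\<in>G. \<Phi> (\<iota> x) = \<phi> x)"
proof -
  have \<iota>: "lie_map L addv scv brv scA \<iota>" using uea by (simp add: is_uea_def)
  obtain \<Phi> where \<Phi>: "alg_hom scA scB \<Phi>" "\<forall>x\<in>L. \<Phi> (\<iota> x) = \<phi> x"
    and unique: "\<And>\<Psi>. alg_hom scA scB \<Psi> \<Longrightarrow> \<forall>x\<in>L. \<Psi> (\<iota> x) = \<phi> x \<Longrightarrow> \<Psi> = \<Phi>"
    using uea B \<phi> unfolding is_uea_def by metis
  show ?thesis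
  proof (rule ex1I[of _ \<Phi>])
    show "alg_hom scA scB \<Phi> \<and> (\<forall>x\<in>G. \<Phi> (\<iota> x) = \<phi> x)"
      using \<Phi> G by (auto simp: lie_generates_def)
  next
    fix \<Psi> assume \<Psi>: "alg_hom scA scB \<Psi> \<and> (\<forall>x\<in>G. \<Psi> (\<iota> x) = \<phi> x)"
    then have "\<forall>x\<in>L. \<Psi> (\<iota> x) = \<phi> x"
      using lie_map_eq_on_generated[OF L G lie_map_alg_hom_comp[OF _ \<iota>] \<phi>] by blast
    then show "\<Psi> = \<Phi>" using \<Psi> unique by blast
  qed
qed

lemma iota_to_gsum_theta_gens:
  assumes n: "1 \<le> n" and B: "calg scB" and \<iota>': "lie_map (gsum n) padd psc pbr scB \<iota>'"
  shows "\<And>i. 1 \<le> i \<Longrightarrow> i < n \<Longrightarrow> \<iota>' (to_gsum n (be n i)) = \<iota>' (cf n i) + \<iota>' (cfb n i)"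
    and "\<And>i. 1 \<le> i \<Longrightarrow> i < n \<Longrightarrow> \<iota>' (to_gsum n (bf n i)) = \<iota>' (ce n i) + \<iota>' (ceb n i)"
    and "\<And>i. 1 \<le> i \<Longrightarrow> i \<le> n \<Longrightarrow> \<iota>' (to_gsum n (bd n i)) = - \<iota>' (ch n i) - \<iota>' (chb n i)"
    and "\<iota>' (to_gsum n (be n n)) = scB 2 (\<iota>' (cf n n))"
    and "\<iota>' (to_gsum n (bf n n)) = \<iota>' (ce n n)"
    and "\<iota>' (to_gsum n (bd n (n+1))) = - scB 2 (\<iota>' (ch n (n+1)))"
proof -
  have add: "\<iota>' (padd p q) = \<iota>' p + \<iota>' q" if "p \<in> gsum n" "q \<in> gsum n" for p q
    using \<iota>' that by (simp add: lie_map_def)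
  have sc: "\<iota>' (psc c p) = scB c (\<iota>' p)" if "p \<in> gsum n" for p c
    using \<iota>' that by (simp add: lie_map_def)
  have gens: "ce n i \<in> gsum n" "cf n i \<in> gsum n" "ch n i \<in> gsum n"
    "ceb n i \<in> gsum n" "cfb n i \<in> gsum n" "chb n i \<in> gsum n" for i
    by (auto simp: gsum_def ce_def cf_def ch_def ceb_def cfb_def chb_def)
  have padd_gsum: "padd p q \<in> gsum n" if "p \<in> gsum n" "q \<in> gsum n" for p q
    using that by (auto simp: gsum_def padd_def)
  show "\<And>i. 1 \<le> i \<Longrightarrow> i < n \<Longrightarrow> \<iota>' (to_gsum n (be n i)) = \<iota>' (cf n i) + \<iota>' (cfb n i)"
    "\<And>i. 1 \<le> i \<Longrightarrow> i < n \<Longrightarrow> \<iota>' (to_gsum n (bf n i)) = \<iota>' (ce n i) + \<iota>' (ceb n i)"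
    by (simp_all add: to_gsum_be to_gsum_bf add gens)
  show "\<And>i. 1 \<le> i \<Longrightarrow> i \<le> n \<Longrightarrow> \<iota>' (to_gsum n (bd n i)) = - \<iota>' (ch n i) - \<iota>' (chb n i)"
    by (simp add: to_gsum_bd sc add gens padd_gsum calg_uminus[OF B] calg_one[OF B])
  show "\<iota>' (to_gsum n (be n n)) = scB 2 (\<iota>' (cf n n))" "\<iota>' (to_gsum n (bf n n)) = \<iota>' (ce n n)"
    "\<iota>' (to_gsum n (bd n (n+1))) = - scB 2 (\<iota>' (ch n (n+1)))"
    unfolding to_gsum_be_last[OF n] to_gsum_bf_last[OF n] to_gsum_bd_last
    by (simp_all add: sc gens calg_uminus[OF B])
qed

lemma theta_gens_values_iff:
  assumes n: "1 \<le> n" and B: "calg scB" and \<iota>': "lie_map (gsum n) padd psc pbr scB \<iota>'"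
  shows "(\<forall>x\<in>theta_gens n. f x = \<iota>' (to_gsum n x)) \<longleftrightarrow>
     (\<forall>i. 1 \<le> i \<and> i < n \<longrightarrow>
        f (be n i) = \<iota>' (cf n i) + \<iota>' (cfb n i) \<and>
        f (bf n i) = \<iota>' (ce n i) + \<iota>' (ceb n i)) \<and>
     f (be n n) = scB 2 (\<iota>' (cf n n)) \<and>
     f (bf n n) = \<iota>' (ce n n) \<and>
     (\<forall>i. 1 \<le> i \<and> i \<le> n \<longrightarrow> f (bd n i) = - \<iota>' (ch n i) - \<iota>' (chb n i)) \<and>
     f (bd n (n+1)) = - scB 2 (\<iota>' (ch n (n+1)))"
proof -
  have upto: "(\<forall>i. 1 \<le> i \<and> i \<le> n \<longrightarrow> P i) \<longleftrightarrow> (\<forall>i. 1 \<le> i \<and> i < n \<longrightarrow> P i) \<and> P n"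
    and upto_Suc: "(\<forall>i. 1 \<le> i \<and> i \<le> n + 1 \<longrightarrow> P i) \<longleftrightarrow> (\<forall>i. 1 \<le> i \<and> i \<le> n \<longrightarrow> P i) \<and> P (n + 1)"
    for P :: "nat \<Rightarrow> bool"
    using n by (auto simp: order_le_less le_Suc_eq)
  let ?P1 = "\<lambda>i. f (be n i) = \<iota>' (to_gsum n (be n i)) \<and> f (bf n i) = \<iota>' (to_gsum n (bf n i))"
  let ?P2 = "\<lambda>i. f (bd n i) = \<iota>' (to_gsum n (bd n i))"
  have "(\<forall>x\<in>theta_gens n. f x = \<iota>' (to_gsum n x)) \<longleftrightarrow>
      (\<forall>i. 1 \<le> i \<and> i \<le> n \<longrightarrow> ?P1 i) \<and> (\<forall>i. 1 \<le> i \<and> i \<le> n + 1 \<longrightarrow> ?P2 i)"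
    unfolding theta_gens_def by blast
  also have "\<dots> \<longleftrightarrow> (\<forall>i. 1 \<le> i \<and> i < n \<longrightarrow> ?P1 i) \<and> ?P1 n \<and> (\<forall>i. 1 \<le> i \<and> i \<le> n \<longrightarrow> ?P2 i) \<and> ?P2 (n + 1)"
    unfolding upto[of ?P1] upto_Suc[of ?P2] by blast
  also have "\<dots> \<longleftrightarrow> (\<forall>i. 1 \<le> i \<and> i < n \<longrightarrow>
        f (be n i) = \<iota>' (cf n i) + \<iota>' (cfb n i) \<and> f (bf n i) = \<iota>' (ce n i) + \<iota>' (ceb n i)) \<and>
     f (be n n) = scB 2 (\<iota>' (cf n n)) \<and> f (bf n n) = \<iota>' (ce n n) \<and>
     (\<forall>i. 1 \<le> i \<and> i \<le> n \<longrightarrow> f (bd n i) = - \<iota>' (ch n i) - \<iota>' (chb n i)) \<and>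
     f (bd n (n+1)) = - scB 2 (\<iota>' (ch n (n+1)))"
    using iota_to_gsum_theta_gens[OF n B \<iota>'] by auto
  finally show ?thesis .
qed

theorem lemma2:
  fixes n :: nat
    and scA :: "complex \<Rightarrow> 'a::ring_1 \<Rightarrow> 'a"
    and \<iota> :: "complex mat \<Rightarrow> 'a"
    and scB :: "complex \<Rightarrow> 'b::ring_1 \<Rightarrow> 'b"
    and \<iota>' :: "complex mat \<times> complex mat \<Rightarrow> 'b"
  assumes "n \<ge> 1"
    and "is_uea (gtheta n) (+) (\<cdot>\<^sub>m) commutator scA \<iota> TYPE('b)"
    and "is_uea (gsum n) padd psc pbr scB \<iota>' TYPE('b)"
  shows "\<exists>!\<psi>. alg_hom scA scB \<psi> \<and>
     (\<forall>i. 1 \<le> i \<and> i < n \<longrightarrow>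
        \<psi> (\<iota> (be n i)) = \<iota>' (cf n i) + \<iota>' (cfb n i) \<and>
        \<psi> (\<iota> (bf n i)) = \<iota>' (ce n i) + \<iota>' (ceb n i)) \<and>
     \<psi> (\<iota> (be n n)) = scB 2 (\<iota>' (cf n n)) \<and>
     \<psi> (\<iota> (bf n n)) = \<iota>' (ce n n) \<and>
     (\<forall>i. 1 \<le> i \<and> i \<le> n \<longrightarrow> \<psi> (\<iota> (bd n i)) = - \<iota>' (ch n i) - \<iota>' (chb n i)) \<and>
     \<psi> (\<iota> (bd n (n+1))) = - scB 2 (\<iota>' (ch n (n+1)))"
proof -
  have B: "calg scB" and \<iota>': "lie_map (gsum n) padd psc pbr scB \<iota>'"
    using assms(3) by (simp_all add: is_uea_def)
  have "\<exists>!\<psi>. alg_hom scA scB \<psi> \<and> (\<forall>x\<in>theta_gens n. \<psi> (\<iota> x) = \<iota>' (to_gsum n x))"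
    by (rule uea_hom_unique_on_generators[OF assms(2) gtheta_lie_closed lie_generates_gtheta_theta_gens[OF assms(1)]
          B lie_map_comp_to_gsum[OF \<iota>']])
  then show ?thesis
    by (simp only: theta_gens_values_iff[OF assms(1) B \<iota>'])
qed

end
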